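(* Let $G$ be a locally compact group with left Haar measure $m$. Then either $I(G)=1$ or $I(G)=\infty$.
   Context: $I(G)=\sup_{K\in \mathcal K}\inf_{A\in \mathcal K_p} m(KA)/m(A)$, where $\mathcal K$ is the collection of nonempty compact subsets of $G$, $\mathcal K_p$ the collection of compact subsets of positive left Haar measure, and $KA=\{ka:k\in K,a\in A\}$. *)

theory Defs
  imports "HOL-Analysis.Analysis"
begin

text \<open>Groups are written additively (class group_add, not necessarily commutative),
  so the product KA of the paper is the set {k + a}.\<close>

definition set_prod :: "'a::plus set \<Rightarrow> 'a set \<Rightarrow> 'a set" where
  "set_prod K A = {k + a | k a. k \<in> K \<and> a \<in> A}"

definition locally_compact_group :: "'a::{t2_space, group_add} itself \<Rightarrow> bool" where
  "locally_compact_group _ \<longleftrightarrow>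
     continuous_on UNIV (\<lambda>p::'a \<times> 'a. fst p + snd p) \<and>
     continuous_on UNIV (\<lambda>x::'a. - x) \<and>
     (\<forall>x::'a. \<exists>U K. open U \<and> compact K \<and> x \<in> U \<and> U \<subseteq> K)"

definition left_haar_measure :: "'a::{topological_space, group_add} measure \<Rightarrow> bool" where
  "left_haar_measure m \<longleftrightarrow>
     sets m = sets borel \<and>
     (\<forall>a S. S \<in> sets borel \<longrightarrow> emeasure m ((\<lambda>x. a + x) ` S) = emeasure m S) \<and>
     (\<forall>K. compact K \<longrightarrow> emeasure m K < \<infinity>) \<and>
     (\<forall>U. open U \<and> U \<noteq> {} \<longrightarrow> emeasure m U > 0) \<and>
     (\<forall>S \<in> sets borel. emeasure m S = (INF U \<in> {U. open U \<and> S \<subseteq> U}. emeasure m U)) \<and>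
     (\<forall>U. open U \<longrightarrow> emeasure m U = (SUP K \<in> {K. compact K \<and> K \<subseteq> U}. emeasure m K))"

definition I_const :: "'a::{topological_space, group_add} measure \<Rightarrow> ereal" where
  "I_const m = (SUP K \<in> {K. compact K \<and> K \<noteq> {}}.
                 INF A \<in> {A. compact A \<and> emeasure m A > 0}.
                   ereal (measure m (set_prod K A) / measure m A))"

end

theory Submission
  imports Defs
begin

text \<open>Translating A by any k \<in> K puts a copy of A inside KA, so m(KA) \<ge> m(A) and I(G) \<ge> 1.
  If I(G) > 1, some nonempty compact K and some c > 1 satisfy m(KA) \<ge> c m(A) for every
  compact A of positive measure. Since KA is again such a set and K^(n+1) A = K^n (KA), induction
  gives m(K^n A) \<ge> c^n m(A), hence I(G) \<ge> c^n for all n, i.e. I(G) = \<infinity>.\<close>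

definition set_pow :: "'a::monoid_add set \<Rightarrow> nat \<Rightarrow> 'a set" where
  "set_pow K n = ((\<lambda>X. set_prod X K) ^^ n) {0}"

definition expansion_factor :: "'a::{topological_space, group_add} measure \<Rightarrow> 'a set \<Rightarrow> ereal" where
  "expansion_factor m K = (INF A \<in> {A. compact A \<and> emeasure m A > 0}.
                             ereal (measure m (set_prod K A) / measure m A))"

lemma I_const_eq_SUP_expansion_factor:
  "I_const m = (SUP K \<in> {K. compact K \<and> K \<noteq> {}}. expansion_factor m K)"
  unfolding I_const_def expansion_factor_def ..

lemma set_prod_eq_image: "set_prod K A = (\<lambda>p. fst p + snd p) ` (K \<times> A)"
  unfolding set_prod_def by force

lemma compact_set_prod:
  fixes K A :: "'a::{topological_space, plus} set"
  assumes "continuous_on UNIV (\<lambda>p::'a \<times> 'a. fst p + snd p)" and "compact K" and "compact A"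
  shows "compact (set_prod K A)"
  unfolding set_prod_eq_image
  using assms by (intro compact_continuous_image compact_Times) (auto intro: continuous_on_subset)

lemma set_prod_assoc:
  fixes X K A :: "'a::semigroup_add set"
  shows "set_prod (set_prod X K) A = set_prod X (set_prod K A)"
  unfolding set_prod_def by (auto; metis add.assoc)

lemma set_prod_zero_left [simp]: "set_prod {0} (A::'a::monoid_add set) = A"
  unfolding set_prod_def by auto

lemma translate_subset_set_prod: "k \<in> K \<Longrightarrow> (\<lambda>x. k + x) ` A \<subseteq> set_prod K A"
  unfolding set_prod_def by auto

lemma set_prod_nonempty: "K \<noteq> {} \<Longrightarrow> A \<noteq> {} \<Longrightarrow> set_prod K A \<noteq> {}"
  unfolding set_prod_def by auto

lemma set_pow_0 [simp]: "set_pow K 0 = {0}"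
  and set_pow_Suc [simp]: "set_pow K (Suc n) = set_prod (set_pow K n) K"
  unfolding set_pow_def by simp_all

lemma compact_set_pow:
  fixes K :: "'a::{topological_space, monoid_add} set"
  assumes "continuous_on UNIV (\<lambda>p::'a \<times> 'a. fst p + snd p)" and "compact K"
  shows "compact (set_pow K n)"
  by (induction n) (simp_all add: compact_set_prod assms)

lemma set_pow_nonempty: "K \<noteq> {} \<Longrightarrow> set_pow K n \<noteq> {}"
  by (induction n) (simp_all add: set_prod_nonempty)

lemma set_prod_set_pow_Suc:
  fixes K A :: "'a::monoid_add set"
  shows "set_prod (set_pow K (Suc n)) A = set_prod (set_pow K n) (set_prod K A)"
  by (simp add: set_prod_assoc)

lemma
  assumes "left_haar_measure m"
  shows sets_left_haar: "sets m = sets borel"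
    and emeasure_left_haar_translate:
      "S \<in> sets borel \<Longrightarrow> emeasure m ((\<lambda>x. a + x) ` S) = emeasure m S"
    and emeasure_left_haar_compact_finite: "compact K \<Longrightarrow> emeasure m K < \<infinity>"
proof -
  note haar = assms[unfolded left_haar_measure_def]
  show "sets m = sets borel"
    using haar by (rule conjunct1)
  show "S \<in> sets borel \<Longrightarrow> emeasure m ((\<lambda>x. a + x) ` S) = emeasure m S"
    using conjunct1[OF conjunct2[OF haar]] by blast
  show "compact K \<Longrightarrow> emeasure m K < \<infinity>"
    using conjunct1[OF conjunct2[OF conjunct2[OF haar]]] by blast
qed

lemma measure_left_haar_pos:
  assumes "left_haar_measure m" and "compact A" and "emeasure m A > 0"
  shows "measure m A > 0"
  using assms emeasure_left_haar_compact_finite[OF assms(1,2)]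
  by (simp add: measure_def enn2real_positive_iff)

lemma emeasure_left_haar_le_set_prod:
  fixes K A :: "'a::{t2_space, group_add} set"
  assumes haar: "left_haar_measure m"
    and "continuous_on UNIV (\<lambda>p::'a \<times> 'a. fst p + snd p)"
    and "compact K" "K \<noteq> {}" "compact A"
  shows "emeasure m A \<le> emeasure m (set_prod K A)"
proof -
  obtain k where "k \<in> K" using assms by blast
  have "emeasure m A = emeasure m ((\<lambda>x. k + x) ` A)"
    using emeasure_left_haar_translate[OF haar borel_compact] assms by simp
  also have "\<dots> \<le> emeasure m (set_prod K A)"
    using \<open>k \<in> K\<close> assms sets_left_haar[OF haar]
    by (intro emeasure_mono translate_subset_set_prod) (simp_all add: borel_compact compact_set_prod)
  finally show ?thesis .
qed

lemma measure_left_haar_le_set_prod: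
  fixes K A :: "'a::{t2_space, group_add} set"
  assumes haar: "left_haar_measure m"
    and cont: "continuous_on UNIV (\<lambda>p::'a \<times> 'a. fst p + snd p)"
    and "compact K" "K \<noteq> {}" "compact A"
  shows "measure m A \<le> measure m (set_prod K A)"
  using emeasure_left_haar_le_set_prod[OF assms]
    emeasure_left_haar_compact_finite[OF haar compact_set_prod[OF cont assms(3,5)]]
  by (simp add: measure_def enn2real_mono)

lemma expansion_factorI:
  assumes "\<And>A. compact A \<Longrightarrow> emeasure m A > 0 \<Longrightarrow> c * measure m A \<le> measure m (set_prod K A)"
    and "left_haar_measure m"
  shows "ereal c \<le> expansion_factor m K"
  unfolding expansion_factor_def
proof (rule INF_greatest)
  fix A assume "A \<in> {A. compact A \<and> emeasure m A > 0}"
  then have A: "compact A" "emeasure m A > 0" by auto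
  show "ereal c \<le> ereal (measure m (set_prod K A) / measure m A)"
    using assms(1)[OF A] measure_left_haar_pos[OF assms(2) A] by (simp add: pos_le_divide_eq)
qed

lemma expansion_factorD:
  assumes "ereal c \<le> expansion_factor m K" and "left_haar_measure m"
    and "compact A" and "emeasure m A > 0"
  shows "c * measure m A \<le> measure m (set_prod K A)"
proof -
  have "expansion_factor m K \<le> ereal (measure m (set_prod K A) / measure m A)"
    unfolding expansion_factor_def using assms(3,4) by (auto intro: INF_lower)
  with assms(1) have "c \<le> measure m (set_prod K A) / measure m A"
    by (metis ereal_less_eq(3) order_trans)
  then show ?thesis
    using measure_left_haar_pos[OF assms(2-4)] by (simp add: pos_le_divide_eq)
qed

lemma one_le_expansion_factor:
  fixes K :: "'a::{t2_space, group_add} set"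
  assumes "left_haar_measure m"
    and "continuous_on UNIV (\<lambda>p::'a \<times> 'a. fst p + snd p)"
    and "compact K" "K \<noteq> {}"
  shows "1 \<le> expansion_factor m K"
  using expansion_factorI[of m 1 K] measure_left_haar_le_set_prod[OF assms] assms(1)
  by (simp add: one_ereal_def)

lemma expansion_factor_set_pow:
  fixes K :: "'a::{t2_space, group_add} set"
  assumes haar: "left_haar_measure m"
    and cont: "continuous_on UNIV (\<lambda>p::'a \<times> 'a. fst p + snd p)"
    and K: "compact K" "K \<noteq> {}"
    and c: "c \<ge> 0" "ereal c \<le> expansion_factor m K"
  shows "ereal (c ^ n) \<le> expansion_factor m (set_pow K n)"
proof (rule expansion_factorI[OF _ haar])
  fix A assume "compact A" "emeasure m A > 0"
  then show "c ^ n * measure m A \<le> measure m (set_prod (set_pow K n) A)"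
  proof (induction n arbitrary: A)
    case 0
    then show ?case by simp
  next
    case (Suc n)
    have KA: "compact (set_prod K A)" "emeasure m (set_prod K A) > 0"
      using Suc.prems compact_set_prod[OF cont K(1)] emeasure_left_haar_le_set_prod[OF haar cont K]
      by (auto intro: order.strict_trans2)
    have "c ^ Suc n * measure m A = c ^ n * (c * measure m A)" by simp
    also have "\<dots> \<le> c ^ n * measure m (set_prod K A)"
      using expansion_factorD[OF c(2) haar Suc.prems] c(1) by (simp add: mult_left_mono)
    also have "\<dots> \<le> measure m (set_prod (set_pow K (Suc n)) A)"
      using Suc.IH[OF KA] by (simp only: set_prod_set_pow_Suc)
    finally show ?case .
  qed
qed

lemma ereal_eq_infty_if_powers_le:
  assumes "1 < c" and "\<And>n. ereal (c ^ n) \<le> x"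
  shows "x = \<infinity>"
proof (rule ccontr)
  assume "x \<noteq> \<infinity>"
  moreover have "x \<noteq> -\<infinity>" using assms(2)[of 0] by auto
  ultimately obtain r where "x = ereal r" by (cases x) auto
  moreover obtain n where "r < c ^ n" using real_arch_pow[OF assms(1)] by blast
  ultimately show False using assms(2)[of n] by simp
qed

theorem lemma3p1:
  fixes m :: "'a::{t2_space, group_add} measure"
  assumes "locally_compact_group TYPE('a)"
    and "left_haar_measure m"
  shows "I_const m = 1 \<or> I_const m = \<infinity>"
proof -
  note haar = assms(2)
  have cont: "continuous_on UNIV (\<lambda>p::'a \<times> 'a. fst p + snd p)"
    using assms(1) unfolding locally_compact_group_def by blast
  have "1 \<le> I_const m"
    unfolding I_const_eq_SUP_expansion_factor
    by (rule SUP_upper2[of "{0}"]) (auto intro: one_le_expansion_factor[OF haar cont])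
  moreover have "I_const m = \<infinity>" if "1 < I_const m"
  proof -
    obtain K where K: "compact K" "K \<noteq> {}" "1 < expansion_factor m K"
      using \<open>1 < I_const m\<close> by (auto simp: I_const_eq_SUP_expansion_factor less_SUP_iff)
    obtain c where c: "1 < ereal c" "ereal c < expansion_factor m K"
      using ereal_dense2[OF K(3)] by blast
    have "ereal (c ^ n) \<le> I_const m" for n
      unfolding I_const_eq_SUP_expansion_factor
      using K c compact_set_pow[OF cont K(1)] set_pow_nonempty[OF K(2)]
        expansion_factor_set_pow[OF haar cont K(1,2), of c n]
      by (intro SUP_upper2[of "set_pow K n"]) auto
    then show ?thesis using c(1) by (intro ereal_eq_infty_if_powers_le[of c]) auto
  qed
  ultimately show ?thesis by fastforce
qed

end
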